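(* Let $m_j(x,y)=x^{k_j}y^{l_j}$, $j=1,\dots,q$, be monomials with nonnegative integer exponents, and let $f(x,y)=c_1m_1(x,y)+\cdots+c_qm_q(x,y)$ with real coefficients satisfying $|c_j|\le1$ for $j=1,\dots,q$. Let $\delta>0$ and for $i=1,\dots,N$ let $$S_i=\{(x,y)\mid x=x_i>0,\ 0<y_i-\delta\le y\le y_i+\delta\}$$ be vertical segments, and suppose that for every $i$ the curve $f=0$ passes through $S_i$ (i.e. $f$ vanishes at some point of $S_i$). Then $$\sum_{i=1}^N f(x_i,y_i)^2\le \delta^2\,q\sum_{i=1}^N h(x_i,y_i+\delta),\qquad\text{where } h(x,y)=\sum_{j=1}^q\Big(\frac{\partial m_j(x,y)}{\partial y}\Big)^2.$$ *)

theory Defs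
  imports "HOL-Analysis.Analysis"
begin

definition monom2 :: "nat \<Rightarrow> nat \<Rightarrow> real \<Rightarrow> real \<Rightarrow> real" where
  "monom2 k l x y = x ^ k * y ^ l"

end

theory Submission
  imports Defs
begin

text \<open>Let \<open>y\<^sub>0\<close> be a zero of \<open>f(x\<^sub>i, \<cdot>)\<close> on the segment \<open>S\<^sub>i\<close>. For nonnegative arguments
  each \<open>\<partial>m\<^sub>j/\<partial>y\<close> is nonnegative and increasing in \<open>y\<close>, so on \<open>S\<^sub>i\<close> it is bounded by its value
  at the top end \<open>y\<^sub>i + \<delta>\<close>. Hence \<open>|f(x\<^sub>i, y\<^sub>i)| = |f(x\<^sub>i, y\<^sub>i) - f(x\<^sub>i, y\<^sub>0)| \<le> \<delta> \<Sum>\<^sub>j \<partial>m\<^sub>j/\<partial>y (x\<^sub>i, y\<^sub>i + \<delta>)\<close>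
  since \<open>|c\<^sub>j| \<le> 1\<close>, and squaring with the Cauchy-Schwarz inequality \<open>(\<Sum>\<^sub>j d\<^sub>j)\<^sup>2 \<le> q \<Sum>\<^sub>j d\<^sub>j\<^sup>2\<close> bounds
  each summand of the left-hand side by the corresponding summand of the right-hand side.\<close>

lemma abs_power_diff_le:
  fixes a b M :: "'a::linordered_idom"
  assumes "0 \<le> a" "0 \<le> b" "a \<le> M" "b \<le> M"
  shows "\<bar>a ^ n - b ^ n\<bar> \<le> of_nat n * M ^ (n - 1) * \<bar>a - b\<bar>"
proof -
  have term_le: "b ^ (n - Suc i) * a ^ i \<le> M ^ (n - 1)" if "i < n" for i
  proof -
    have "b ^ (n - Suc i) * a ^ i \<le> M ^ (n - Suc i) * M ^ i"
      using assms by (intro mult_mono power_mono) auto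
    also have "\<dots> = M ^ (n - 1)"
      using that by (simp flip: power_add)
    finally show ?thesis .
  qed
  have "\<bar>a ^ n - b ^ n\<bar> = \<bar>a - b\<bar> * (\<Sum>i<n. b ^ (n - Suc i) * a ^ i)"
    using assms by (simp add: power_diff_sumr2 abs_mult sum_nonneg)
  also have "\<dots> \<le> \<bar>a - b\<bar> * (\<Sum>i<n. M ^ (n - 1))"
    by (intro mult_left_mono sum_mono term_le) auto
  finally show ?thesis
    by (simp add: ac_simps)
qed

lemma deriv_monom2: "deriv (\<lambda>t. monom2 k l x t) y = x ^ k * (of_nat l * y ^ (l - 1))"
proof -
  have "((\<lambda>t. x ^ k * t ^ l) has_real_derivative x ^ k * (of_nat l * y ^ (l - 1))) (at y)"
    by (auto intro!: derivative_eq_intros)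
  then show ?thesis
    unfolding monom2_def by (rule DERIV_imp_deriv)
qed

lemma deriv_monom2_nonneg: "0 \<le> x \<Longrightarrow> 0 \<le> y \<Longrightarrow> 0 \<le> deriv (\<lambda>t. monom2 k l x t) y"
  by (simp add: deriv_monom2)

lemma abs_monom2_diff_le:
  assumes "0 \<le> x" "0 \<le> y" "0 \<le> y'" "y \<le> Y" "y' \<le> Y"
  shows "\<bar>monom2 k l x y - monom2 k l x y'\<bar> \<le> deriv (\<lambda>t. monom2 k l x t) Y * \<bar>y - y'\<bar>"
proof -
  have "\<bar>monom2 k l x y - monom2 k l x y'\<bar> = x ^ k * \<bar>y ^ l - y' ^ l\<bar>"
    using assms by (simp add: monom2_def abs_mult flip: right_diff_distrib)
  also have "\<dots> \<le> x ^ k * (of_nat l * Y ^ (l - 1) * \<bar>y - y'\<bar>)"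
    using assms by (intro mult_left_mono abs_power_diff_le) auto
  finally show ?thesis
    by (simp add: deriv_monom2 ac_simps)
qed

lemma abs_monom2_sum_le_dist_root:
  assumes c_le: "\<And>j. j \<in> J \<Longrightarrow> \<bar>c j\<bar> \<le> 1"
    and root: "(\<Sum>j\<in>J. c j * monom2 (k j) (l j) x y') = 0"
    and "0 \<le> x" "0 \<le> y" "0 \<le> y'" "y \<le> Y" "y' \<le> Y"
  shows "\<bar>\<Sum>j\<in>J. c j * monom2 (k j) (l j) x y\<bar>
           \<le> \<bar>y - y'\<bar> * (\<Sum>j\<in>J. deriv (\<lambda>t. monom2 (k j) (l j) x t) Y)"
proof -
  have "\<bar>\<Sum>j\<in>J. c j * monom2 (k j) (l j) x y\<bar>
          = \<bar>\<Sum>j\<in>J. c j * (monom2 (k j) (l j) x y - monom2 (k j) (l j) x y')\<bar>"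
    using root by (simp add: right_diff_distrib sum_subtractf)
  also have "\<dots> \<le> (\<Sum>j\<in>J. \<bar>c j\<bar> * \<bar>monom2 (k j) (l j) x y - monom2 (k j) (l j) x y'\<bar>)"
    by (rule order_trans[OF sum_abs]) (simp add: abs_mult)
  also have "\<dots> \<le> (\<Sum>j\<in>J. 1 * (deriv (\<lambda>t. monom2 (k j) (l j) x t) Y * \<bar>y - y'\<bar>))"
    using assms by (intro sum_mono mult_mono abs_monom2_diff_le) auto
  finally show ?thesis
    by (simp add: sum_distrib_left ac_simps)
qed

lemma monom2_sum_squared_le:
  assumes "\<And>j. j \<in> J \<Longrightarrow> \<bar>c j\<bar> \<le> 1"
    and "(\<Sum>j\<in>J. c j * monom2 (k j) (l j) x y') = 0"
    and "0 \<le> x" "0 \<le> y" "0 \<le> y'" "y \<le> Y" "y' \<le> Y" "\<bar>y - y'\<bar> \<le> \<delta>"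
  shows "(\<Sum>j\<in>J. c j * monom2 (k j) (l j) x y)\<^sup>2
           \<le> \<delta>\<^sup>2 * card J * (\<Sum>j\<in>J. (deriv (\<lambda>t. monom2 (k j) (l j) x t) Y)\<^sup>2)"
proof -
  let ?d = "\<lambda>j. deriv (\<lambda>t. monom2 (k j) (l j) x t) Y"
  have "0 \<le> sum ?d J"
    using assms by (intro sum_nonneg deriv_monom2_nonneg) auto
  then have "\<bar>\<Sum>j\<in>J. c j * monom2 (k j) (l j) x y\<bar> \<le> \<delta> * sum ?d J"
    using abs_monom2_sum_le_dist_root[OF assms(1-7)] assms(8)
    by (meson mult_right_mono order_trans)
  then have "\<bar>\<Sum>j\<in>J. c j * monom2 (k j) (l j) x y\<bar>\<^sup>2 \<le> (\<delta> * sum ?d J)\<^sup>2"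
    by (intro power_mono) auto
  then have "(\<Sum>j\<in>J. c j * monom2 (k j) (l j) x y)\<^sup>2 \<le> \<delta>\<^sup>2 * (sum ?d J)\<^sup>2"
    by (simp add: power_mult_distrib)
  also have "\<dots> \<le> \<delta>\<^sup>2 * ((\<Sum>j\<in>J. (?d j)\<^sup>2) * card J)"
    by (intro mult_left_mono sum_squared_le_sum_of_squares) auto
  finally show ?thesis
    by (simp add: ac_simps)
qed

theorem theorem2:
  fixes q N :: nat
    and k l :: "nat \<Rightarrow> nat"
    and c :: "nat \<Rightarrow> real"
    and xs ys :: "nat \<Rightarrow> real"
    and \<delta> :: real
    and f h :: "real \<Rightarrow> real \<Rightarrow> real"
  assumes f_def: "\<And>x y. f x y = (\<Sum>j=1..q. c j * monom2 (k j) (l j) x y)"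
    and h_def: "\<And>x y. h x y = (\<Sum>j=1..q. (deriv (\<lambda>t. monom2 (k j) (l j) x t) y)^2)"
    and c_bound: "\<And>j. j \<in> {1..q} \<Longrightarrow> \<bar>c j\<bar> \<le> 1"
    and delta_pos: "\<delta> > 0"
    and x_pos: "\<And>i. i \<in> {1..N} \<Longrightarrow> xs i > 0"
    and seg_pos: "\<And>i. i \<in> {1..N} \<Longrightarrow> ys i - \<delta> > 0"
    and passes: "\<And>i. i \<in> {1..N} \<Longrightarrow>
                   \<exists>y. ys i - \<delta> \<le> y \<and> y \<le> ys i + \<delta> \<and> f (xs i) y = 0"
  shows "(\<Sum>i=1..N. (f (xs i) (ys i))^2) \<le> \<delta>^2 * real q * (\<Sum>i=1..N. h (xs i) (ys i + \<delta>))"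
proof -
  have summand_le: "(f (xs i) (ys i))\<^sup>2 \<le> \<delta>\<^sup>2 * real q * h (xs i) (ys i + \<delta>)"
    if i: "i \<in> {1..N}" for i
  proof -
    obtain y' where y': "ys i - \<delta> \<le> y'" "y' \<le> ys i + \<delta>" "f (xs i) y' = 0"
      using passes[OF i] by blast
    have "(\<Sum>j=1..q. c j * monom2 (k j) (l j) (xs i) (ys i))\<^sup>2
            \<le> \<delta>\<^sup>2 * card {1..q} * (\<Sum>j=1..q. (deriv (\<lambda>t. monom2 (k j) (l j) (xs i) t) (ys i + \<delta>))\<^sup>2)"
      using y' x_pos[OF i] seg_pos[OF i] delta_pos
      by (intro monom2_sum_squared_le[where y' = y'] c_bound) (auto simp: f_def)
    then show ?thesis
      by (simp add: f_def h_def)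
  qed
  have "(\<Sum>i=1..N. (f (xs i) (ys i))\<^sup>2) \<le> (\<Sum>i=1..N. \<delta>\<^sup>2 * real q * h (xs i) (ys i + \<delta>))"
    by (intro sum_mono summand_le)
  then show ?thesis
    by (simp add: sum_distrib_left)
qed

end
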